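(* Let $b\ge 2$ and $k\ge 1$ be integers, set $B=b^k$, let $m\ge 1$ be an integer with $\gcd(m,b)=1$, and let $r$ be an integer with $0\le r<m$. Let $s\ge 1$ be an integer with $s\equiv r\pmod m$ and $\gcd(s,b)=1$. Define $\omega_s:=\operatorname{ord}_{ms}(B)$ and \[ n_s:=\sum_{j=0}^{s-1} B^{j\omega_s}. \] Then: (1) $n_s\equiv r\pmod{m}$; (2) $\mathsf{s}_B(n_s)=\mathsf{s}_b(n_s)=s$; (3) $s\mid n_s$. In particular, $n_s$ is simultaneously $b$-Niven and $B$-Niven.
   Context: For integers $a$ and $N\ge 1$ with $\gcd(a,N)=1$, $\operatorname{ord}_N(a)$ denotes the least positive integer $\omega$ with $a^\omega\equiv 1\pmod N$ (so $\operatorname{ord}_1(a)=1$). For an integer base $g\ge 2$ and a positive integer $c$ with base-$g$ expansion $c=\sum_{i=0}^{L} d_i g^i$, $d_i\in\{0,1,\dots,g-1\}$, $d_L\neq 0$, the base-$g$ digit sum is $\mathsf{s}_g(c)=\sum_{i=0}^L d_i$. A positive integer $c$ is $g$-Niven if $\mathsf{s}_g(c)\mid c$. *)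

theory Defs
  imports "HOL-Number_Theory.Number_Theory"
begin

fun digit_sum :: "nat \<Rightarrow> nat \<Rightarrow> nat" where
  "digit_sum g c = (if g < 2 \<or> c = 0 then 0 else c mod g + digit_sum g (c div g))"

declare digit_sum.simps [simp del]

definition niven :: "nat \<Rightarrow> nat \<Rightarrow> bool" where
  "niven g c \<longleftrightarrow> 0 < c \<and> digit_sum g c dvd c"

end

theory Submission
  imports Defs
begin

text \<open>Since \<open>B\<^sup>\<omega> \<equiv> 1 (mod m s)\<close>, the number \<open>n = \<Sum>j<s. (B\<^sup>\<omega>)\<^sup>j\<close> is congruent
  to \<open>s\<close> modulo \<open>m s\<close>, which gives both \<open>n \<equiv> s \<equiv> r (mod m)\<close> and \<open>s dvd n\<close>.
  As \<open>B\<^sup>\<omega> = b\<^bsup>k \<omega>\<^esup>\<close> with \<open>\<omega> \<ge> 1\<close>, the expansion of \<open>n\<close> in base \<open>B\<close> and in base \<open>b\<close>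
  has exactly \<open>s\<close> nonzero digits, all equal to \<open>1\<close>, so both digit sums are \<open>s\<close>.\<close>

lemma digit_sum_0 [simp]: "digit_sum g 0 = 0"
  by (subst digit_sum.simps) simp

lemma digit_sum_digit_plus_base_mult:
  assumes "g \<ge> 2" and "a < g"
  shows "digit_sum g (a + g * c) = a + digit_sum g c"
proof (cases "a + g * c = 0")
  case True
  then show ?thesis using assms(1) by auto
next
  case False
  then have "digit_sum g (a + g * c) = (a + g * c) mod g + digit_sum g ((a + g * c) div g)"
    using assms(1) by (subst digit_sum.simps) simp
  then show ?thesis using assms by simp
qed

lemma digit_sum_base_power_mult:
  assumes "g \<ge> 2"
  shows "digit_sum g (g ^ e * c) = digit_sum g c"
proof (induction e)
  case (Suc e)
  have "digit_sum g (g ^ Suc e * c) = digit_sum g (0 + g * (g ^ e * c))"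
    by (simp add: mult.assoc)
  then show ?case
    using Suc digit_sum_digit_plus_base_mult[OF assms, of 0] assms by simp
qed simp

lemma digit_sum_geometric_sum:
  assumes "g \<ge> 2" and "e \<ge> 1"
  shows "digit_sum g (\<Sum>j<s. (g ^ e) ^ j) = s"
proof (induction s)
  case (Suc s)
  have "(\<Sum>j<Suc s. (g ^ e) ^ j) = 1 + g ^ e * (\<Sum>j<s. (g ^ e) ^ j)"
    by (subst sum.lessThan_Suc_shift) (simp add: sum_distrib_left)
  also have "g ^ e * (\<Sum>j<s. (g ^ e) ^ j) = g * (g ^ (e - 1) * (\<Sum>j<s. (g ^ e) ^ j))"
    using assms(2) by (simp add: power_eq_if)
  finally have "(\<Sum>j<Suc s. (g ^ e) ^ j) = 1 + g * (g ^ (e - 1) * (\<Sum>j<s. (g ^ e) ^ j))" .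
  then show ?case
    using Suc assms(1) digit_sum_digit_plus_base_mult[of g 1] digit_sum_base_power_mult
    by simp
qed simp

lemma cong_geometric_sum_of_cong_1:
  fixes a N :: nat
  assumes "[a = 1] (mod N)"
  shows "[(\<Sum>j<s. a ^ j) = s] (mod N)"
proof -
  have "[(\<Sum>j<s. a ^ j) = (\<Sum>j<s. 1 ^ j)] (mod N)"
    using assms by (intro cong_sum cong_pow)
  then show ?thesis by simp
qed

theorem proposition4p1:
  fixes b k m r s :: nat
  assumes "b \<ge> 2" and "k \<ge> 1" and "m \<ge> 1" and "coprime m b"
    and "r < m"
    and "s \<ge> 1" and "[s = r] (mod m)" and "coprime s b"
  defines "B \<equiv> b ^ k"
  defines "\<omega> \<equiv> ord (m * s) B"
  defines "n \<equiv> (\<Sum>j<s. B ^ (j * \<omega>))"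
  shows "[n = r] (mod m) \<and> digit_sum B n = s \<and> digit_sum b n = s \<and> s dvd n
         \<and> niven b n \<and> niven B n"
proof -
  have "coprime (m * s) B"
    unfolding B_def using assms(4,8) by simp
  then have \<omega>_pos: "\<omega> \<ge> 1"
    unfolding \<omega>_def by (simp add: Suc_le_eq)
  have B_ge_2: "B \<ge> 2"
    unfolding B_def using assms(1,2) power_increasing[of 1 k b] by simp
  have n_geometric: "n = (\<Sum>j<s. (B ^ \<omega>) ^ j)"
    unfolding n_def by (simp add: power_mult[symmetric] mult.commute)
  have "[n = s] (mod m * s)"
    unfolding n_geometric \<omega>_def by (intro cong_geometric_sum_of_cong_1 ord)
  then have "[n = s] (mod m)" and "[n = s] (mod s)"
    by (auto intro: cong_modulus_mult_nat cong_dvd_modulus_nat)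
  then have cong_r: "[n = r] (mod m)" and dvd: "s dvd n"
    using assms(7) by (auto intro: cong_trans simp: cong_dvd_iff)
  have digits_B: "digit_sum B n = s"
    unfolding n_geometric using digit_sum_geometric_sum[OF B_ge_2 \<omega>_pos] .
  have "B ^ \<omega> = b ^ (k * \<omega>)" and "k * \<omega> \<ge> 1"
    unfolding B_def using assms(2) \<omega>_pos by (simp_all add: power_mult)
  then have digits_b: "digit_sum b n = s"
    unfolding n_geometric using digit_sum_geometric_sum[OF assms(1)] by simp
  have "n > 0"
    unfolding n_geometric using assms(6) by (intro sum_pos2[of _ 0]) auto
  then show ?thesis
    using cong_r digits_B digits_b dvd by (simp add: niven_def)
qed

end
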